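(* For every (possibly partial) function $f:\mathcal{S}\to\mathcal{Z}$, $\mathcal{S}\subseteq\mathcal{X}\times\mathcal{Y}$, every $\varepsilon\ge0$ and every $z_0\in\mathcal{Z}$, $$\mathrm{srec}^{z_0}_\varepsilon(f)\le\overline{\mathrm{prt}}_\varepsilon(f)\le\mathrm{prt}_\varepsilon(f).$$
   Context: $\mathcal{X},\mathcal{Y},\mathcal{Z}$ finite; rectangles are $A\times B$ with $A\subseteq\mathcal{X},B\subseteq\mathcal{Y}$ (including empty); sums over $R$ range over all rectangles. Relaxed partition bound: for a distribution $\mu$ on $\mathcal{X}\times\mathcal{Y}$, $\overline{\mathrm{prt}}^\mu_\varepsilon(f)$ is the value of: minimize $1/\eta$ over $\eta>0$, $p_{R,z}\ge0$ s.t. (i) $\sum_{(x,y)\in\mathcal{S}}\mu(x,y)\sum_{R\ni(x,y)}p_{R,f(x,y)}+\sum_{(x,y)\notin\mathcal{S}}\mu(x,y)\sum_{z,R\ni(x,y)}p_{R,z}\ge(1-\varepsilon)\eta$; (ii) $\forall (x,y)\in\mathcal{X}\times\mathcal{Y}$: $\sum_{z,R\ni(x,y)}p_{R,z}\le\eta$; (iii) $\sum_{R,z}p_{R,z}=1$. $\overline{\mathrm{prt}}_\varepsilon(f)=\max_\mu\overline{\mathrm{prt}}^\mu_\varepsilon(f)$. Partition bound (Jain–Klauck): $\mathrm{prt}_\varepsilon(f)=\min\sum_{R,z}w_{R,z}$ over $w_{R,z}\ge0$ s.t. $\forall(x,y)\in\mathcal{S}$: $\sum_{R\ni(x,y)}w_{R,f(x,y)}\ge1-\varepsilon$,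 and $\forall(x,y)\in\mathcal{X}\times\mathcal{Y}$: $\sum_{z,R\ni(x,y)}w_{R,z}=1$. Smooth rectangle bound: $\mathrm{srec}^{z_0}_\varepsilon(f)=\min\sum_R w'_R$ over $w'_R\ge0$ s.t. $\forall(x,y)\in f^{-1}(z_0)$: $1-\varepsilon\le\sum_{R\ni(x,y)}w'_R\le1$, and $\forall(x,y)\in\mathcal{S}\setminus f^{-1}(z_0)$: $\sum_{R\ni(x,y)}w'_R\le\varepsilon$. *)

theory Defs
  imports Main Complex_Main
begin

text \<open>Rectangles are pairs (A,B) with A a subset of X and B a subset of Y.
  The partial function f on S is modelled by a total f together with its domain S;
  values of f outside S are never used.\<close>

definition rects_at :: "'x \<times> 'y \<Rightarrow> ('x set \<times> 'y set) set" where
  "rects_at xy = {R. fst xy \<in> fst R \<and> snd xy \<in> snd R}"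

definition prt :: "('x::finite \<times> 'y::finite) set \<Rightarrow> ('x \<times> 'y \<Rightarrow> 'z::finite) \<Rightarrow> real \<Rightarrow> real" where
  "prt S f \<epsilon> = Inf {(\<Sum>R\<in>UNIV. \<Sum>z\<in>UNIV. w R z) | w.
      (\<forall>R z. 0 \<le> w R z) \<and>
      (\<forall>xy\<in>S. 1 - \<epsilon> \<le> (\<Sum>R\<in>rects_at xy. w R (f xy))) \<and>
      (\<forall>xy. (\<Sum>z\<in>UNIV. \<Sum>R\<in>rects_at xy. w R z) = 1)}"

definition prt_relax_mu :: "('x::finite \<times> 'y::finite) set \<Rightarrow> ('x \<times> 'y \<Rightarrow> 'z::finite) \<Rightarrow> real
    \<Rightarrow> ('x \<times> 'y \<Rightarrow> real) \<Rightarrow> real" where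
  "prt_relax_mu S f \<epsilon> \<mu> = Inf {1 / \<eta> | \<eta> p.
      0 < \<eta> \<and> (\<forall>R z. 0 \<le> p R z) \<and>
      (\<Sum>xy\<in>S. \<mu> xy * (\<Sum>R\<in>rects_at xy. p R (f xy)))
        + (\<Sum>xy\<in>- S. \<mu> xy * (\<Sum>z\<in>UNIV. \<Sum>R\<in>rects_at xy. p R z)) \<ge> (1 - \<epsilon>) * \<eta> \<and>
      (\<forall>xy. (\<Sum>z\<in>UNIV. \<Sum>R\<in>rects_at xy. p R z) \<le> \<eta>) \<and>
      (\<Sum>R\<in>UNIV. \<Sum>z\<in>UNIV. p R z) = 1}"

definition prt_relax :: "('x::finite \<times> 'y::finite) set \<Rightarrow> ('x \<times> 'y \<Rightarrow> 'z::finite) \<Rightarrow> real \<Rightarrow> real" where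
  "prt_relax S f \<epsilon> = Sup {prt_relax_mu S f \<epsilon> \<mu> | \<mu>.
      (\<forall>xy. 0 \<le> \<mu> xy) \<and> (\<Sum>xy\<in>UNIV. \<mu> xy) = 1}"

definition srec :: "('x::finite \<times> 'y::finite) set \<Rightarrow> ('x \<times> 'y \<Rightarrow> 'z::finite) \<Rightarrow> real \<Rightarrow> 'z \<Rightarrow> real" where
  "srec S f \<epsilon> z0 = Inf {(\<Sum>R\<in>UNIV. w R) | w.
      (\<forall>R. 0 \<le> w R) \<and>
      (\<forall>xy\<in>S. f xy = z0 \<longrightarrow> 1 - \<epsilon> \<le> (\<Sum>R\<in>rects_at xy. w R) \<and> (\<Sum>R\<in>rects_at xy. w R) \<le> 1) \<and>
      (\<forall>xy\<in>S. f xy \<noteq> z0 \<longrightarrow> (\<Sum>R\<in>rects_at xy. w R) \<le> \<epsilon>)}"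

end

theory Submission
  imports Defs "HOL-Analysis.Analysis"
begin

(* prt_relax <= prt: a partition witness w has total weight W >= 1, and p = w / W with
   eta = 1 / W is a witness of the relaxed program for every distribution mu, of the
   same value W.  Hence every prt_relax_mu is <= prt, and so is their supremum.

   srec <= prt_relax is LP duality, done by hand with a separating hyperplane.  Fix
   0 <= t < srec.  The fractional covers of total weight <= t form a compact convex set
   of weight vectors; their answer profiles (weight of correct answers at each input)
   form a compact convex set disjoint from the closed orthant of profiles >= 1 - eps,
   since a cover in the intersection yields a smooth rectangle witness of weight <= t.
   The normal of a separating hyperplane is nonnegative and, normalised, is a
   distribution mu under which no such cover is correct with probability 1 - eps.
   A relaxed witness (eta, p) scaled by 1/eta is a cover of weight 1/eta that is
   correct with probability 1 - eps, so 1/eta >= t; hence prt_relax_mu >= t. *)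

definition is_distribution :: "('a::finite \<Rightarrow> real) \<Rightarrow> bool" where
  "is_distribution \<mu> \<longleftrightarrow> (\<forall>a. 0 \<le> \<mu> a) \<and> (\<Sum>a\<in>UNIV. \<mu> a) = 1"

lemma uniform_is_distribution: "is_distribution (\<lambda>a::'a::finite. 1 / real CARD('a))"
  by (simp add: is_distribution_def)

definition prt_values :: "('x::finite \<times> 'y::finite) set \<Rightarrow> ('x \<times> 'y \<Rightarrow> 'z::finite) \<Rightarrow> real \<Rightarrow> real set" where
  "prt_values S f \<epsilon> = {(\<Sum>R\<in>UNIV. \<Sum>z\<in>UNIV. w R z) | w.
      (\<forall>R z. 0 \<le> w R z) \<and>
      (\<forall>xy\<in>S. 1 - \<epsilon> \<le> (\<Sum>R\<in>rects_at xy. w R (f xy))) \<and>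
      (\<forall>xy. (\<Sum>z\<in>UNIV. \<Sum>R\<in>rects_at xy. w R z) = 1)}"

definition relax_mu_values :: "('x::finite \<times> 'y::finite) set \<Rightarrow> ('x \<times> 'y \<Rightarrow> 'z::finite) \<Rightarrow> real
    \<Rightarrow> ('x \<times> 'y \<Rightarrow> real) \<Rightarrow> real set" where
  "relax_mu_values S f \<epsilon> \<mu> = {1 / \<eta> | \<eta> p.
      0 < \<eta> \<and> (\<forall>R z. 0 \<le> p R z) \<and>
      (\<Sum>xy\<in>S. \<mu> xy * (\<Sum>R\<in>rects_at xy. p R (f xy)))
        + (\<Sum>xy\<in>- S. \<mu> xy * (\<Sum>z\<in>UNIV. \<Sum>R\<in>rects_at xy. p R z)) \<ge> (1 - \<epsilon>) * \<eta> \<and>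
      (\<forall>xy. (\<Sum>z\<in>UNIV. \<Sum>R\<in>rects_at xy. p R z) \<le> \<eta>) \<and>
      (\<Sum>R\<in>UNIV. \<Sum>z\<in>UNIV. p R z) = 1}"

definition srec_values :: "('x::finite \<times> 'y::finite) set \<Rightarrow> ('x \<times> 'y \<Rightarrow> 'z::finite) \<Rightarrow> real \<Rightarrow> 'z \<Rightarrow> real set" where
  "srec_values S f \<epsilon> z0 = {(\<Sum>R\<in>UNIV. w R) | w.
      (\<forall>R. 0 \<le> w R) \<and>
      (\<forall>xy\<in>S. f xy = z0 \<longrightarrow> 1 - \<epsilon> \<le> (\<Sum>R\<in>rects_at xy. w R) \<and> (\<Sum>R\<in>rects_at xy. w R) \<le> 1) \<and>
      (\<forall>xy\<in>S. f xy \<noteq> z0 \<longrightarrow> (\<Sum>R\<in>rects_at xy. w R) \<le> \<epsilon>)}"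

lemma prt_eq_Inf: "prt S f \<epsilon> = Inf (prt_values S f \<epsilon>)"
  by (simp add: prt_def prt_values_def)

lemma prt_relax_mu_eq_Inf: "prt_relax_mu S f \<epsilon> \<mu> = Inf (relax_mu_values S f \<epsilon> \<mu>)"
  by (simp add: prt_relax_mu_def relax_mu_values_def)

lemma srec_eq_Inf: "srec S f \<epsilon> z0 = Inf (srec_values S f \<epsilon> z0)"
  by (simp add: srec_def srec_values_def)

lemma bdd_below_relax_mu_values: "bdd_below (relax_mu_values S f \<epsilon> \<mu>)"
  unfolding relax_mu_values_def by (rule bdd_belowI[of _ 0]) auto

lemma bdd_below_srec_values: "bdd_below (srec_values S f \<epsilon> z0)"
  unfolding srec_values_def by (rule bdd_belowI[of _ 0]) (auto intro: sum_nonneg)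

section \<open>The relaxed partition bound is at most the partition bound\<close>

text \<open>The partition into single cells, each labelled with the value of \<open>f\<close>, is feasible.\<close>
lemma prt_values_nonempty:
  fixes S :: "('x::finite \<times> 'y::finite) set" and f :: "'x \<times> 'y \<Rightarrow> 'z::finite"
  assumes "0 \<le> \<epsilon>"
  shows "prt_values S f \<epsilon> \<noteq> {}"
proof -
  define w :: "'x set \<times> 'y set \<Rightarrow> 'z \<Rightarrow> real" where
    "w R z = (if \<exists>a b. R = ({a},{b}) \<and> z = f (a,b) then 1 else 0)" for R z
  have cell: "(\<Sum>R\<in>rects_at xy. w R z) = (if z = f xy then 1 else 0)" for xy z
  proof -
    obtain x y where xy: "xy = (x,y)" by fastforce
    have "(\<Sum>R\<in>rects_at xy. w R z)
        = (\<Sum>R\<in>rects_at xy. if R = ({x},{y}) then (if z = f xy then 1 else 0) else 0)"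
      by (rule sum.cong) (auto simp: w_def rects_at_def xy)
    also have "\<dots> = (if z = f xy then 1 else 0)"
      by (simp add: rects_at_def xy)
    finally show ?thesis .
  qed
  have "(\<Sum>R\<in>UNIV. \<Sum>z\<in>UNIV. w R z) \<in> prt_values S f \<epsilon>"
    unfolding prt_values_def mem_Collect_eq using assms
    by (intro exI[of _ w]) (simp add: cell, simp add: w_def)
  then show ?thesis by blast
qed

text \<open>A partition witness has total weight at least 1, since any single cell is covered
  with total weight exactly 1.\<close>
lemma partition_weight_ge_1:
  fixes w :: "'x::finite set \<times> 'y::finite set \<Rightarrow> 'z::finite \<Rightarrow> real"
  assumes nonneg: "\<forall>R z. 0 \<le> w R z"
    and cover: "\<forall>xy. (\<Sum>z\<in>UNIV. \<Sum>R\<in>rects_at xy. w R z) = 1"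
  shows "1 \<le> (\<Sum>R\<in>UNIV. \<Sum>z\<in>UNIV. w R z)"
proof -
  have "1 = (\<Sum>z\<in>UNIV. \<Sum>R\<in>rects_at undefined. w R z)" using cover by metis
  also have "\<dots> = (\<Sum>R\<in>rects_at undefined. \<Sum>z\<in>UNIV. w R z)" by (rule sum.swap)
  also have "\<dots> \<le> (\<Sum>R\<in>UNIV. \<Sum>z\<in>UNIV. w R z)"
    by (rule sum_mono2) (auto intro: sum_nonneg simp: nonneg)
  finally show ?thesis .
qed

lemma sum_Compl_split:
  fixes g :: "'a::finite \<Rightarrow> real"
  shows "(\<Sum>x\<in>A. g x) + (\<Sum>x\<in>-A. g x) = (\<Sum>x\<in>UNIV. g x)"
  using sum.subset_diff[of A UNIV g] by (simp add: Compl_eq_Diff_UNIV)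

text \<open>Rescaling a partition witness of weight \<open>W\<close> by \<open>1/W\<close> gives a relaxed witness
  with \<open>\<eta> = 1/W\<close>, hence of the same value \<open>W\<close>, for every distribution: every input
  is covered with weight exactly \<open>\<eta>\<close> and answered correctly with weight at least
  \<open>(1 - \<epsilon>) \<eta>\<close>.\<close>
lemma prt_values_subset_relax_mu_values:
  fixes S :: "('x::finite \<times> 'y::finite) set" and f :: "'x \<times> 'y \<Rightarrow> 'z::finite"
  assumes eps: "0 \<le> \<epsilon>" and mu: "is_distribution \<mu>"
  shows "prt_values S f \<epsilon> \<subseteq> relax_mu_values S f \<epsilon> \<mu>"
proof
  fix W assume "W \<in> prt_values S f \<epsilon>"
  then obtain w where W: "W = (\<Sum>R\<in>UNIV. \<Sum>z\<in>UNIV. w R z)" and w0: "\<forall>R z. 0 \<le> w R z"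
    and correct: "\<forall>xy\<in>S. 1 - \<epsilon> \<le> (\<Sum>R\<in>rects_at xy. w R (f xy))"
    and cover: "\<forall>xy. (\<Sum>z\<in>UNIV. \<Sum>R\<in>rects_at xy. w R z) = 1"
    unfolding prt_values_def by blast
  have W1: "1 \<le> W" using partition_weight_ge_1[OF w0 cover] W by simp
  have mu0: "0 \<le> \<mu> xy" for xy using mu unfolding is_distribution_def by blast
  have mu1: "(\<Sum>xy\<in>UNIV. \<mu> xy) = 1" using mu unfolding is_distribution_def by blast
  define p where "p R z = w R z / W" for R z
  have cover_p: "(\<Sum>z\<in>UNIV. \<Sum>R\<in>rects_at xy. p R z) = 1 / W" for xy
    using cover[rule_format, of xy] by (simp add: p_def sum_divide_distrib[symmetric])
  have "(1 - \<epsilon>) * (1 / W) = (\<Sum>xy\<in>UNIV. \<mu> xy * ((1 - \<epsilon>) / W))"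
    using mu1 by (simp only: sum_distrib_right[symmetric]) simp
  also have "\<dots> = (\<Sum>xy\<in>S. \<mu> xy * ((1 - \<epsilon>) / W)) + (\<Sum>xy\<in>-S. \<mu> xy * ((1 - \<epsilon>) / W))"
    by (rule sum_Compl_split[symmetric])
  also have "\<dots> \<le> (\<Sum>xy\<in>S. \<mu> xy * (\<Sum>R\<in>rects_at xy. p R (f xy)))
      + (\<Sum>xy\<in>- S. \<mu> xy * (\<Sum>z\<in>UNIV. \<Sum>R\<in>rects_at xy. p R z))"
  proof (rule add_mono; rule sum_mono)
    fix xy assume "xy \<in> S"
    then have "(1 - \<epsilon>) / W \<le> (\<Sum>R\<in>rects_at xy. p R (f xy))"
      using correct W1 by (simp add: p_def sum_divide_distrib[symmetric] divide_right_mono)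
    then show "\<mu> xy * ((1 - \<epsilon>) / W) \<le> \<mu> xy * (\<Sum>R\<in>rects_at xy. p R (f xy))"
      by (rule mult_left_mono[OF _ mu0])
  next
    fix xy
    have "(1 - \<epsilon>) / W \<le> (\<Sum>z\<in>UNIV. \<Sum>R\<in>rects_at xy. p R z)"
      using eps W1 by (simp add: cover_p divide_right_mono)
    then show "\<mu> xy * ((1 - \<epsilon>) / W) \<le> \<mu> xy * (\<Sum>z\<in>UNIV. \<Sum>R\<in>rects_at xy. p R z)"
      by (rule mult_left_mono[OF _ mu0])
  qed
  finally have correct_p: "(1 - \<epsilon>) * (1 / W) \<le> (\<Sum>xy\<in>S. \<mu> xy * (\<Sum>R\<in>rects_at xy. p R (f xy)))
      + (\<Sum>xy\<in>- S. \<mu> xy * (\<Sum>z\<in>UNIV. \<Sum>R\<in>rects_at xy. p R z))" .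
  have "1 / (1 / W) \<in> relax_mu_values S f \<epsilon> \<mu>"
    unfolding relax_mu_values_def mem_Collect_eq
  proof (intro exI conjI)
    show "0 < 1 / W" using W1 by simp
    show "\<forall>R z. 0 \<le> p R z" using w0 W1 by (simp add: p_def)
    show "\<forall>xy. (\<Sum>z\<in>UNIV. \<Sum>R\<in>rects_at xy. p R z) \<le> 1 / W" using cover_p by simp
    show "(\<Sum>R\<in>UNIV. \<Sum>z\<in>UNIV. p R z) = 1"
      using W1 by (simp add: p_def W[symmetric] sum_divide_distrib[symmetric])
  qed (fact correct_p | simp)+
  then show "W \<in> relax_mu_values S f \<epsilon> \<mu>" by simp
qed

lemma relax_mu_values_nonempty:
  assumes "0 \<le> \<epsilon>" and "is_distribution \<mu>"
  shows "relax_mu_values S f \<epsilon> \<mu> \<noteq> {}"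
  using prt_values_nonempty[OF assms(1), of S f] prt_values_subset_relax_mu_values[OF assms]
  by blast

lemma prt_relax_mu_nonneg:
  assumes "0 \<le> \<epsilon>" and "is_distribution \<mu>"
  shows "0 \<le> prt_relax_mu S f \<epsilon> \<mu>"
  unfolding prt_relax_mu_eq_Inf
  by (rule cInf_greatest[OF relax_mu_values_nonempty[OF assms]]) (auto simp: relax_mu_values_def)

lemma prt_relax_mu_le_prt:
  assumes "0 \<le> \<epsilon>" and "is_distribution \<mu>"
  shows "prt_relax_mu S f \<epsilon> \<mu> \<le> prt S f \<epsilon>"
  unfolding prt_eq_Inf prt_relax_mu_eq_Inf
  by (rule cInf_superset_mono[OF prt_values_nonempty[OF assms(1)] bdd_below_relax_mu_values
        prt_values_subset_relax_mu_values[OF assms]])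

lemma prt_relax_eq_Sup:
  "prt_relax S f \<epsilon> = Sup ((\<lambda>\<mu>. prt_relax_mu S f \<epsilon> \<mu>) ` Collect is_distribution)"
  unfolding prt_relax_def is_distribution_def by (simp only: image_Collect)

lemma prt_relax_mu_le_prt_relax:
  assumes "0 \<le> \<epsilon>" and "is_distribution \<mu>"
  shows "prt_relax_mu S f \<epsilon> \<mu> \<le> prt_relax S f \<epsilon>"
  unfolding prt_relax_eq_Sup
proof (rule cSup_upper)
  show "prt_relax_mu S f \<epsilon> \<mu> \<in> (\<lambda>\<mu>. prt_relax_mu S f \<epsilon> \<mu>) ` Collect is_distribution"
    using assms(2) by blast
  show "bdd_above ((\<lambda>\<mu>. prt_relax_mu S f \<epsilon> \<mu>) ` Collect is_distribution)"
    using prt_relax_mu_le_prt[OF assms(1)] by (intro bdd_aboveI[of _ "prt S f \<epsilon>"]) blast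
qed

lemma prt_relax_le_prt:
  assumes "0 \<le> \<epsilon>"
  shows "prt_relax S f \<epsilon> \<le> prt S f \<epsilon>"
  unfolding prt_relax_eq_Sup
  using uniform_is_distribution prt_relax_mu_le_prt[OF assms]
  by (intro cSup_least) blast+

section \<open>Fractional covers and their answer profiles\<close>

text \<open>Weight vectors assign a weight to every labelled rectangle \<open>(R, z)\<close>; they live in a
  Euclidean space, so that convex separation is available.\<close>
type_synonym ('x, 'y, 'z) weights = "real^(('x set \<times> 'y set) \<times> 'z)"

definition coverage :: "('x::finite, 'y::finite, 'z::finite) weights \<Rightarrow> 'x \<times> 'y \<Rightarrow> real" where
  "coverage q xy = (\<Sum>z\<in>UNIV. \<Sum>R\<in>rects_at xy. q $ (R, z))"

text \<open>Weight of correct answers at an input: on \<open>S\<close> the rectangles labelled \<open>f xy\<close>,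
  outside \<open>S\<close> every label is acceptable.\<close>
definition answer :: "('x::finite \<times> 'y::finite) set \<Rightarrow> ('x \<times> 'y \<Rightarrow> 'z::finite)
    \<Rightarrow> ('x, 'y, 'z) weights \<Rightarrow> 'x \<times> 'y \<Rightarrow> real" where
  "answer S f q xy = (if xy \<in> S then (\<Sum>R\<in>rects_at xy. q $ (R, f xy)) else coverage q xy)"

definition answer_profile :: "('x::finite \<times> 'y::finite) set \<Rightarrow> ('x \<times> 'y \<Rightarrow> 'z::finite)
    \<Rightarrow> ('x, 'y, 'z) weights \<Rightarrow> real^('x \<times> 'y)" where
  "answer_profile S f q = (\<chi> xy. answer S f q xy)"

definition fractional_covers :: "real \<Rightarrow> ('x::finite, 'y::finite, 'z::finite) weights set" where
  "fractional_covers t = {q. (\<forall>k. 0 \<le> q $ k) \<and> (\<forall>xy. coverage q xy \<le> 1) \<and> (\<Sum>k\<in>UNIV. q $ k) \<le> t}"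

lemma linear_coverage: "linear (\<lambda>q. coverage q xy)"
  by (rule linearI) (simp_all add: coverage_def sum.distrib sum_distrib_left)

lemma linear_answer_profile: "linear (answer_profile S f)"
  by (rule linearI)
     (simp_all add: answer_profile_def answer_def coverage_def vec_eq_iff sum.distrib sum_distrib_left)

lemma linear_vec_nth: "linear (\<lambda>q::real^'n. q $ i)"
  by (rule bounded_linear.linear[OF bounded_linear_vec_nth])

lemma linear_sum_components: "linear (\<lambda>q::real^'n::finite. \<Sum>k\<in>UNIV. q $ k)"
  by (rule linearI) (simp_all add: sum.distrib sum_distrib_left)

lemma linear_halfspaces_convex_closed:
  fixes g :: "'a::euclidean_space \<Rightarrow> real"
  assumes "linear g"
  shows "convex {q. g q \<le> c}" and "closed {q. g q \<le> c}"
    and "convex {q. c \<le> g q}" and "closed {q. c \<le> g q}"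
proof -
  have cont: "continuous_on UNIV g"
    using assms by (simp add: linear_continuous_on linear_conv_bounded_linear)
  show "convex {q. g q \<le> c}" using convex_linear_vimage[OF assms, of "{..c}"] by (simp add: vimage_def)
  show "convex {q. c \<le> g q}" using convex_linear_vimage[OF assms, of "{c..}"] by (simp add: vimage_def)
  show "closed {q. g q \<le> c}" by (rule closed_Collect_le[OF cont continuous_on_const])
  show "closed {q. c \<le> g q}" by (rule closed_Collect_le[OF continuous_on_const cont])
qed

text \<open>The fractional covers of weight \<open>\<le> t\<close> form a compact convex set: an intersection of
  closed half-spaces, bounded in the l1-norm by \<open>t\<close>.\<close>
lemma fractional_covers_convex_compact:
  "convex (fractional_covers t) \<and> compact (fractional_covers t)"
proof -
  have eq: "fractional_covers t = (\<Inter>k. {q. 0 \<le> q $ k}) \<inter> (\<Inter>xy. {q. coverage q xy \<le> 1})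
      \<inter> {q. (\<Sum>k\<in>UNIV. q $ k) \<le> t}"
    by (auto simp: fractional_covers_def)
  note halfspaces = linear_halfspaces_convex_closed[OF linear_vec_nth]
    linear_halfspaces_convex_closed[OF linear_coverage]
    linear_halfspaces_convex_closed[OF linear_sum_components]
  have "bounded (fractional_covers t)"
    unfolding bounded_iff
  proof (intro exI ballI)
    fix q assume q: "q \<in> fractional_covers t"
    have "norm q \<le> (\<Sum>k\<in>UNIV. \<bar>q $ k\<bar>)" by (rule norm_le_l1_cart)
    also have "\<dots> = (\<Sum>k\<in>UNIV. q $ k)"
      using q unfolding fractional_covers_def by (intro sum.cong) auto
    also have "\<dots> \<le> t" using q unfolding fractional_covers_def by blast
    finally show "norm q \<le> t" .
  qed
  moreover have "convex (fractional_covers t)" "closed (fractional_covers t)"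
    unfolding eq by (intro convex_Int convex_INT closed_Int closed_INT ballI halfspaces)+
  ultimately show ?thesis by (simp add: compact_eq_bounded_closed)
qed

lemma label_mass_le_coverage:
  assumes "\<forall>k. 0 \<le> q $ k"
  shows "(\<Sum>R\<in>rects_at xy. q $ (R, z)) \<le> coverage q xy"
  unfolding coverage_def using assms by (intro member_le_sum) (auto intro: sum_nonneg)

lemma two_label_masses_le_coverage:
  assumes "\<forall>k. 0 \<le> q $ k" and "z1 \<noteq> z2"
  shows "(\<Sum>R\<in>rects_at xy. q $ (R, z1)) + (\<Sum>R\<in>rects_at xy. q $ (R, z2)) \<le> coverage q xy"
proof -
  have "(\<Sum>R\<in>rects_at xy. q $ (R, z1)) + (\<Sum>R\<in>rects_at xy. q $ (R, z2))
      = (\<Sum>z\<in>{z1, z2}. \<Sum>R\<in>rects_at xy. q $ (R, z))" using assms(2) by simp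
  also have "\<dots> \<le> coverage q xy" unfolding coverage_def using assms(1)
    by (intro sum_mono2) (auto intro: sum_nonneg)
  finally show ?thesis .
qed

lemma sum_UNIV_pairs:
  fixes g :: "'a::finite \<times> 'b::finite \<Rightarrow> real"
  shows "(\<Sum>k\<in>UNIV. g k) = (\<Sum>a\<in>UNIV. \<Sum>b\<in>UNIV. g (a, b))"
  using sum.cartesian_product[of "\<lambda>a b. g (a, b)" UNIV UNIV] by simp

text \<open>A fractional cover that answers correctly with weight \<open>\<ge> 1 - \<epsilon>\<close> everywhere yields a
  smooth rectangle witness: keep only the rectangles labelled \<open>z0\<close>.  Inputs with another
  value of \<open>f\<close> then carry weight \<open>\<le> 1 - (1 - \<epsilon>) = \<epsilon>\<close>.\<close>
lemma srec_le_cover_weight: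
  assumes q0: "\<forall>k. 0 \<le> q $ k" and qc: "\<forall>xy. coverage q xy \<le> 1"
    and qa: "\<forall>xy. 1 - \<epsilon> \<le> answer S f q xy"
  shows "srec S f \<epsilon> z0 \<le> (\<Sum>k\<in>UNIV. q $ k)"
proof -
  define w where "w R = q $ (R, z0)" for R
  have "(\<Sum>R\<in>UNIV. w R) \<in> srec_values S f \<epsilon> z0"
    unfolding srec_values_def mem_Collect_eq
  proof (intro exI conjI ballI allI impI)
    show "0 \<le> w R" for R using q0 unfolding w_def by blast
    fix xy assume xyS: "xy \<in> S"
    have qa_xy: "1 - \<epsilon> \<le> answer S f q xy" and qc_xy: "coverage q xy \<le> 1"
      using qa qc by blast+
    { assume "f xy = z0"
      then show "1 - \<epsilon> \<le> (\<Sum>R\<in>rects_at xy. w R)"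
        using qa_xy xyS by (simp add: answer_def w_def)
      show "(\<Sum>R\<in>rects_at xy. w R) \<le> 1"
        using label_mass_le_coverage[OF q0, where xy=xy and z=z0] qc_xy by (simp add: w_def)
    }
    assume "f xy \<noteq> z0"
    then have "(\<Sum>R\<in>rects_at xy. w R) + (\<Sum>R\<in>rects_at xy. q $ (R, f xy)) \<le> coverage q xy"
      unfolding w_def by (intro two_label_masses_le_coverage[OF q0]) auto
    moreover have "1 - \<epsilon> \<le> (\<Sum>R\<in>rects_at xy. q $ (R, f xy))"
      using qa_xy xyS by (simp add: answer_def)
    ultimately show "(\<Sum>R\<in>rects_at xy. w R) \<le> \<epsilon>" using qc_xy by linarith
  qed simp
  then have "srec S f \<epsilon> z0 \<le> (\<Sum>R\<in>UNIV. w R)"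
    unfolding srec_eq_Inf by (rule cInf_lower[OF _ bdd_below_srec_values])
  also have "\<dots> \<le> (\<Sum>R\<in>UNIV. \<Sum>z\<in>UNIV. q $ (R, z))"
    unfolding w_def using q0 by (intro sum_mono member_le_sum) (auto simp del: split_paired_All)
  also have "\<dots> = (\<Sum>k\<in>UNIV. q $ k)" by (rule sum_UNIV_pairs[symmetric])
  finally show ?thesis .
qed

section \<open>The smooth rectangle bound is at most the relaxed partition bound\<close>

text \<open>If the orthant \<open>{v. \<forall>j. c \<le> v $ j}\<close> lies strictly above the hyperplane
  \<open>inner u v = b\<close>, then \<open>u\<close> is nonnegative: moving far along a coordinate where \<open>u\<close> is
  negative would cross the hyperplane.\<close>
lemma orthant_separating_normal_nonneg:
  fixes u :: "real^'n"
  assumes sep: "\<forall>v. (\<forall>j. c \<le> v $ j) \<longrightarrow> b < inner u v"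
  shows "0 \<le> u $ i"
proof (rule ccontr)
  assume "\<not> 0 \<le> u $ i"
  then have ui: "u $ i < 0" by simp
  define \<sigma> where "\<sigma> = (\<Sum>j\<in>UNIV. u $ j)"
  define M where "M = \<bar>c * \<sigma> - b\<bar> / (- u $ i)"
  have M0: "0 \<le> M" using ui unfolding M_def by (intro divide_nonneg_pos) auto
  define v :: "real^'n" where "v = (\<chi> j. c + (if j = i then M else 0))"
  have "b < inner u v" using sep M0 by (simp add: v_def)
  also have "inner u v = (\<Sum>j\<in>UNIV. u $ j * c + (if j = i then u $ i * M else 0))"
    unfolding inner_vec_def v_def by (intro sum.cong) (auto simp: distrib_left)
  also have "\<dots> = c * \<sigma> + u $ i * M"
    by (simp add: sum.distrib \<sigma>_def mult.commute sum_distrib_left)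
  also have "u $ i * M = - \<bar>c * \<sigma> - b\<bar>" using ui by (simp add: M_def)
  finally show False by linarith
qed

text \<open>Below the smooth rectangle bound, the answer profiles of the
  fractional covers of weight \<open>t\<close> miss the orthant of profiles \<open>\<ge> 1 - \<epsilon>\<close>; the
  normalised normal of a separating hyperplane is a distribution under which no such
  cover answers correctly with probability \<open>1 - \<epsilon>\<close>.\<close>
lemma separating_distribution:
  fixes S :: "('x::finite \<times> 'y::finite) set" and f :: "'x \<times> 'y \<Rightarrow> 'z::finite"
  assumes t0: "0 \<le> t" and ts: "t < srec S f \<epsilon> z0"
  shows "\<exists>\<mu>. is_distribution \<mu> \<and> (\<forall>q \<in> (fractional_covers t :: ('x, 'y, 'z) weights set).
      (\<Sum>xy\<in>UNIV. \<mu> xy * answer S f q xy) < 1 - \<epsilon>)"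
proof -
  define Q where "Q = (fractional_covers t :: ('x, 'y, 'z) weights set)"
  define V where "V = answer_profile S f ` Q"
  define D :: "(real^('x \<times> 'y)) set" where "D = {v. \<forall>xy. 1 - \<epsilon> \<le> v $ xy}"
  have "0 \<in> Q" using t0 by (simp add: Q_def fractional_covers_def coverage_def)
  then have V0: "0 \<in> V" unfolding V_def using linear_0[OF linear_answer_profile] by (metis image_eqI)
  have "convex V" unfolding V_def Q_def
    using linear_answer_profile fractional_covers_convex_compact[THEN conjunct1]
    by (rule convex_linear_image)
  moreover have "compact V" unfolding V_def Q_def
    using linear_answer_profile fractional_covers_convex_compact[THEN conjunct2]
    by (intro compact_continuous_image linear_continuous_on) (auto simp: linear_conv_bounded_linear)
  moreover have "convex D" "closed D"
    unfolding D_def Collect_all_eq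
    by (intro convex_INT closed_INT ballI linear_halfspaces_convex_closed[OF linear_vec_nth])+
  moreover have "V \<inter> D = {}"
  proof -
    have "answer_profile S f q \<notin> D" if q: "q \<in> Q" for q
    proof
      assume "answer_profile S f q \<in> D"
      then have "srec S f \<epsilon> z0 \<le> (\<Sum>k\<in>UNIV. q $ k)"
        using q by (intro srec_le_cover_weight)
          (auto simp: Q_def D_def fractional_covers_def answer_profile_def)
      also have "\<dots> \<le> t" using q by (simp add: Q_def fractional_covers_def)
      finally show False using ts by simp
    qed
    then show ?thesis unfolding V_def by blast
  qed
  ultimately obtain u b where sepV: "\<forall>v\<in>V. inner u v < b" and sepD: "\<forall>v\<in>D. b < inner u v"
    using separating_hyperplane_compact_closed[of V D] V0 by blast
  have u0: "0 \<le> u $ xy" for xy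
    using sepD by (intro orthant_separating_normal_nonneg[where c="1 - \<epsilon>" and b=b]) (simp add: D_def)
  define \<sigma> where "\<sigma> = (\<Sum>xy\<in>UNIV. u $ xy)"
  have b0: "0 < b" using sepV V0 by fastforce
  have "(\<chi> xy. 1 - \<epsilon>) \<in> D" by (simp add: D_def)
  then have "b < inner u (\<chi> xy. 1 - \<epsilon>)" using sepD by blast
  also have "inner u (\<chi> xy. 1 - \<epsilon>) = \<sigma> * (1 - \<epsilon>)"
    by (simp add: inner_vec_def \<sigma>_def sum_distrib_right)
  finally have "b < \<sigma> * (1 - \<epsilon>)" .
  moreover have "0 \<le> \<sigma>" unfolding \<sigma>_def using u0 by (rule sum_nonneg)
  ultimately have \<sigma>0: "0 < \<sigma>" using b0 by (cases "\<sigma> = 0") auto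
  define \<mu> where "\<mu> xy = u $ xy / \<sigma>" for xy
  have "is_distribution \<mu>"
    using u0 \<sigma>0 by (simp add: is_distribution_def \<mu>_def sum_divide_distrib[symmetric] \<sigma>_def[symmetric])
  moreover have "(\<Sum>xy\<in>UNIV. \<mu> xy * answer S f q xy) < 1 - \<epsilon>" if "q \<in> Q" for q
  proof -
    have "\<sigma> * (\<Sum>xy\<in>UNIV. \<mu> xy * answer S f q xy) = (\<Sum>xy\<in>UNIV. u $ xy * answer S f q xy)"
      unfolding sum_distrib_left using \<sigma>0 by (intro sum.cong) (simp_all add: \<mu>_def)
    also have "\<dots> = inner u (answer_profile S f q)"
      by (simp add: inner_vec_def answer_profile_def)
    also have "\<dots> < b" using sepV that unfolding V_def by blast
    also have "\<dots> < \<sigma> * (1 - \<epsilon>)" by fact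
    finally show ?thesis using \<sigma>0 by simp
  qed
  ultimately show ?thesis unfolding Q_def by blast
qed

lemma relax_witness_scaled_cover:
  fixes p :: "'x::finite set \<times> 'y::finite set \<Rightarrow> 'z::finite \<Rightarrow> real"
  assumes \<eta>0: "0 < \<eta>" and p0: "\<forall>R z. 0 \<le> p R z"
    and correct: "(\<Sum>xy\<in>S. \<mu> xy * (\<Sum>R\<in>rects_at xy. p R (f xy)))
        + (\<Sum>xy\<in>- S. \<mu> xy * (\<Sum>z\<in>UNIV. \<Sum>R\<in>rects_at xy. p R z)) \<ge> (1 - \<epsilon>) * \<eta>"
    and cover: "\<forall>xy. (\<Sum>z\<in>UNIV. \<Sum>R\<in>rects_at xy. p R z) \<le> \<eta>"
    and total: "(\<Sum>R\<in>UNIV. \<Sum>z\<in>UNIV. p R z) = 1"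
  shows "\<exists>q \<in> fractional_covers (1 / \<eta>). 1 - \<epsilon> \<le> (\<Sum>xy\<in>UNIV. \<mu> xy * answer S f q xy)"
proof -
  define q where "q = (\<chi> k. p (fst k) (snd k) / \<eta>)"
  have q: "q $ (R, z) = p R z / \<eta>" for R z by (simp add: q_def)
  have cov: "coverage q xy = (\<Sum>z\<in>UNIV. \<Sum>R\<in>rects_at xy. p R z) / \<eta>" for xy
    by (simp add: coverage_def q sum_divide_distrib[symmetric])
  have q_cover: "q \<in> fractional_covers (1 / \<eta>)"
    unfolding fractional_covers_def mem_Collect_eq
  proof (intro conjI allI)
    fix k
    have "0 \<le> p (fst k) (snd k)" using p0 by blast
    then show "0 \<le> q $ k" using \<eta>0 by (simp add: q_def)
  next
    fix xy
    have "(\<Sum>z\<in>UNIV. \<Sum>R\<in>rects_at xy. p R z) \<le> \<eta>" using cover by blast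
    then show "coverage q xy \<le> 1" using \<eta>0 by (simp add: cov)
  next
    show "(\<Sum>k\<in>UNIV. q $ k) \<le> 1 / \<eta>"
      using total by (simp add: sum_UNIV_pairs q sum_divide_distrib[symmetric])
  qed
  have on_S: "(\<Sum>xy\<in>S. \<mu> xy * answer S f q xy)
      = (\<Sum>xy\<in>S. \<mu> xy * (\<Sum>R\<in>rects_at xy. p R (f xy)) / \<eta>)"
    by (intro sum.cong) (simp_all add: answer_def q sum_divide_distrib[symmetric])
  have off_S: "(\<Sum>xy\<in>-S. \<mu> xy * answer S f q xy)
      = (\<Sum>xy\<in>-S. \<mu> xy * (\<Sum>z\<in>UNIV. \<Sum>R\<in>rects_at xy. p R z) / \<eta>)"
    by (intro sum.cong) (simp_all add: answer_def cov)
  have "(\<Sum>xy\<in>UNIV. \<mu> xy * answer S f q xy)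
      = (\<Sum>xy\<in>S. \<mu> xy * answer S f q xy) + (\<Sum>xy\<in>-S. \<mu> xy * answer S f q xy)"
    by (rule sum_Compl_split[symmetric])
  also have "\<dots> = ((\<Sum>xy\<in>S. \<mu> xy * (\<Sum>R\<in>rects_at xy. p R (f xy)))
      + (\<Sum>xy\<in>- S. \<mu> xy * (\<Sum>z\<in>UNIV. \<Sum>R\<in>rects_at xy. p R z))) / \<eta>"
    unfolding on_S off_S add_divide_distrib by (simp only: sum_divide_distrib)
  moreover have "1 - \<epsilon> \<le> ((\<Sum>xy\<in>S. \<mu> xy * (\<Sum>R\<in>rects_at xy. p R (f xy)))
      + (\<Sum>xy\<in>- S. \<mu> xy * (\<Sum>z\<in>UNIV. \<Sum>R\<in>rects_at xy. p R z))) / \<eta>"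
    unfolding pos_le_divide_eq[OF \<eta>0] by (rule correct)
  ultimately have "1 - \<epsilon> \<le> (\<Sum>xy\<in>UNIV. \<mu> xy * answer S f q xy)" by (simp only:)
  with q_cover show ?thesis by blast
qed

lemma fractional_covers_mono: "s \<le> t \<Longrightarrow> fractional_covers s \<subseteq> fractional_covers t"
  by (auto simp: fractional_covers_def)

lemma prt_relax_mu_ge_below_srec:
  fixes S :: "('x::finite \<times> 'y::finite) set" and f :: "'x \<times> 'y \<Rightarrow> 'z::finite"
  assumes eps: "0 \<le> \<epsilon>" and t0: "0 \<le> t" and ts: "t < srec S f \<epsilon> z0"
  shows "\<exists>\<mu>. is_distribution \<mu> \<and> t \<le> prt_relax_mu S f \<epsilon> \<mu>"
proof -
  obtain \<mu> where mu: "is_distribution \<mu>" and miss: "\<forall>q \<in> (fractional_covers t :: ('x, 'y, 'z) weights set).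
      (\<Sum>xy\<in>UNIV. \<mu> xy * answer S f q xy) < 1 - \<epsilon>"
    using separating_distribution[OF t0 ts] by blast
  have "t \<le> v" if "v \<in> relax_mu_values S f \<epsilon> \<mu>" for v
  proof (rule ccontr)
    assume "\<not> t \<le> v"
    obtain \<eta> and p :: "'x set \<times> 'y set \<Rightarrow> 'z \<Rightarrow> real" where v: "v = 1 / \<eta>"
      and witness: "0 < \<eta>" "\<forall>R z. 0 \<le> p R z"
        "(\<Sum>xy\<in>S. \<mu> xy * (\<Sum>R\<in>rects_at xy. p R (f xy)))
          + (\<Sum>xy\<in>- S. \<mu> xy * (\<Sum>z\<in>UNIV. \<Sum>R\<in>rects_at xy. p R z)) \<ge> (1 - \<epsilon>) * \<eta>"
        "\<forall>xy. (\<Sum>z\<in>UNIV. \<Sum>R\<in>rects_at xy. p R z) \<le> \<eta>"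
        "(\<Sum>R\<in>UNIV. \<Sum>z\<in>UNIV. p R z) = 1"
      using \<open>v \<in> relax_mu_values S f \<epsilon> \<mu>\<close> unfolding relax_mu_values_def by blast
    obtain q where q: "q \<in> fractional_covers (1 / \<eta>)"
      and correct: "1 - \<epsilon> \<le> (\<Sum>xy\<in>UNIV. \<mu> xy * answer S f q xy)"
      using relax_witness_scaled_cover[OF witness] by blast
    have "1 / \<eta> \<le> t" using \<open>\<not> t \<le> v\<close> v by simp
    then have "q \<in> fractional_covers t" using q fractional_covers_mono by blast
    with miss have "(\<Sum>xy\<in>UNIV. \<mu> xy * answer S f q xy) < 1 - \<epsilon>" by blast
    with correct show False by linarith
  qed
  then have "t \<le> prt_relax_mu S f \<epsilon> \<mu>"
    unfolding prt_relax_mu_eq_Inf by (rule cInf_greatest[OF relax_mu_values_nonempty[OF eps mu]])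
  with mu show ?thesis by blast
qed

text \<open>Since \<open>prt_relax \<ge> 0\<close>, it exceeds every \<open>t\<close> with \<open>0 < t < srec\<close> and hence \<open>srec\<close>.\<close>
lemma srec_le_prt_relax:
  assumes eps: "0 \<le> \<epsilon>"
  shows "srec S f \<epsilon> z0 \<le> prt_relax S f \<epsilon>"
proof -
  have relax0: "0 \<le> prt_relax S f \<epsilon>"
    using prt_relax_mu_nonneg[OF eps uniform_is_distribution]
      prt_relax_mu_le_prt_relax[OF eps uniform_is_distribution] by (rule order_trans)
  show ?thesis
  proof (cases "0 < srec S f \<epsilon> z0")
    case True
    show ?thesis
    proof (rule dense_le_bounded[OF True])
      fix t assume "0 < t" "t < srec S f \<epsilon> z0"
      then obtain \<mu> where "is_distribution \<mu>" "t \<le> prt_relax_mu S f \<epsilon> \<mu>"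
        using prt_relax_mu_ge_below_srec[OF eps less_imp_le] by blast
      then show "t \<le> prt_relax S f \<epsilon>" using prt_relax_mu_le_prt_relax[OF eps] by (meson order_trans)
    qed
  qed (use relax0 in linarith)
qed

theorem lemma3p2:
  fixes S :: "('x::finite \<times> 'y::finite) set" and f :: "'x \<times> 'y \<Rightarrow> 'z::finite"
    and \<epsilon> :: real and z0 :: 'z
  assumes "0 \<le> \<epsilon>"
  shows "srec S f \<epsilon> z0 \<le> prt_relax S f \<epsilon> \<and> prt_relax S f \<epsilon> \<le> prt S f \<epsilon>"
  using srec_le_prt_relax[OF assms] prt_relax_le_prt[OF assms] by blast

end
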